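(* Let $\mathcal H$ be a functional unit for $\mathbb S$ with $(\mathrm{dup},\mathrm{Dup})\in\mathcal H$, and let $I\subseteq IF(\mathcal H)$ with $\mathrm{dup}\in I$. Then there does not exist an $x\in\mathcal L_f(IF(\mathcal H))$ that produces a reflexive solution of the halting problem for $\mathcal L_f(I)$ with respect to $\mathcal H$.
   Context: Instruction sequences: Fix a symbol $f$ (the focus). For a set $I$ of method names, $\mathcal L_f(I)$ is the set of all finite sequences $u_1;\ldots;u_k$ ($k\ge1$) of primitive instructions, each of which is one of: $f.m$, $+f.m$, $-f.m$ with $m\in I$ (plain basic, positive test, negative test instruction); $\#l$ or $\backslash\#l$ with $l\in\mathbb N$ (forward / backward jump); $!t$ (positive termination); $!f$ (negative termination). Functional units: for a nonempty set $S$, a method operation on $S$ is a total function $M:S\to\{T,F\}\times S$. A functional unit for $S$ is a finite set $\mathcal H$ of pairs $(m,M)$ ($m$ a method name, $M$ a method operation on $S$) in which each method name occurs at most once; $IF(\mathcal H)$ is the set of method names occurring in $\mathcal H$, and $m_{\mathcal H}$ is the method operation paired with $m\in IF(\mathcal H)$. Execution: for $x=u_1;\ldots;u_k$, a functional unit $\mathcal H$ for $S$ and $s\in S$, the execution of $x$ on $\mathcal H(s)$ is the deterministic run through configurations $(i,t)$ (instruction position, current state) starting at $(1,s)$: if $i\notin\{1,\ldots,k\}$ the run stops without terminating (deadlock); if $u_i$ is $f.m$, $+f.m$ or $-f.m$ with $m\notin IF(\mathcal H)$ the run stops without terminating; otherwise, with $(b,t')=m_{\mathcal H}(t)$: $u_i=f.m$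 leads to $(i+1,t')$; $u_i=+f.m$ leads to $(i+1,t')$ if $b=T$ and to $(i+2,t')$ if $b=F$; $u_i=-f.m$ leads to $(i+2,t')$ if $b=T$ and to $(i+1,t')$ if $b=F$; $u_i=\#l$ leads to $(i+l,t)$; $u_i=\backslash\#l$ leads to $(i-l,t)$; $u_i=!t$ (resp. $!f$) makes the run terminate with value $T$ (resp. $F$) and final state $t$. We say $x$ converges on $\mathcal H(s)$, written $x\downarrow\mathcal H(s)$, if the run reaches $!t$ or $!f$ after finitely many steps; otherwise $x$ diverges on $\mathcal H(s)$, written $x\uparrow\mathcal H(s)$. The reply $\mathrm{rep}(x,\mathcal H(s))\in\{T,F,D\}$ is the termination value if $x\downarrow\mathcal H(s)$ and $D$ (divergent) otherwise. Tape states: $\mathbb S=\{v\triangleright w : v,w\in\{0,1,:\}^*\}$, formal pairs of strings over the alphabet $\{0,1,:\}$ (':' is the colon symbol, $\triangleright$ marks the head position); $\triangleright w$ denotes the state with empty left part and right part $w$, and juxtaposition denotes concatenation, so e.g. $\triangleright v:w$ has right part $v$, then a colon, then $w$. For each functional unit $\mathcal H$ for $\mathbb S$ a fixed injective encoding $x\mapsto\overline x$ from $\mathcal L_f(IF(\mathcal H))$ into $\{0,1\}^*$ is given. Duplication: $\mathrm{dup}$ is a method name and $\mathrm{Dup}$ is the method operation on $\mathbb S$ given by $\mathrm{Dup}(v\triangleright w)=\mathrm{Dup}(\triangleright vw)$; $\mathrm{Dup}(\triangleright v)=(T,\triangleright v:v)$ for $v\in\{0,1\}^*$; $\mathrm{Dup}(\triangleright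 v:w)=(T,\triangleright v:v:w)$ for $v\in\{0,1\}^*$, $w\in\{0,1,:\}^*$. Halting problem solutions: let $\mathcal H$ be a functional unit for $\mathbb S$ and $I\subseteq IF(\mathcal H)$. An $x\in\mathcal L_f(IF(\mathcal H))$ produces a solution of the halting problem for $\mathcal L_f(I)$ with respect to $\mathcal H$ if (i) $x\downarrow\mathcal H(s)$ for all $s\in\mathbb S$, and (ii) for all $y\in\mathcal L_f(I)$ and $v\in\{0,1,:\}^*$: $\mathrm{rep}(x,\mathcal H(\triangleright\overline y:v))=T$ iff $y\downarrow\mathcal H(\triangleright v)$. It produces a reflexive solution if moreover $x\in\mathcal L_f(I)$. *)

theory Defs
  imports Main
begin

section \<open>Instruction sequences (focus f is fixed and implicit)\<close>

datatype 'm instr =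
    Basic 'm
  | PosTest 'm
  | NegTest 'm
  | FJump nat
  | BJump nat
  | TermT
  | TermF

fun instr_methods :: "'m instr \<Rightarrow> 'm set" where
  "instr_methods (Basic m) = {m}"
| "instr_methods (PosTest m) = {m}"
| "instr_methods (NegTest m) = {m}"
| "instr_methods _ = {}"

definition L :: "'m set \<Rightarrow> 'm instr list set" where
  "L I = {x. x \<noteq> [] \<and> (\<forall>u\<in>set x. instr_methods u \<subseteq> I)}"

datatype sym = S0 | S1 | Colon

text \<open>A state v \<triangleright> w is the pair (v, w).\<close>
type_synonym tstate = "sym list \<times> sym list"

definition functional_unit :: "('m \<times> ('s \<Rightarrow> bool \<times> 's)) set \<Rightarrow> bool" where
  "functional_unit H \<longleftrightarrow> finite H \<and>
     (\<forall>m M M'. (m, M) \<in> H \<longrightarrow> (m, M') \<in> H \<longrightarrow> M = M')"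

definition IF :: "('m \<times> ('s \<Rightarrow> bool \<times> 's)) set \<Rightarrow> 'm set" where
  "IF H = fst ` H"

definition meth :: "('m \<times> ('s \<Rightarrow> bool \<times> 's)) set \<Rightarrow> 'm \<Rightarrow> 's \<Rightarrow> bool \<times> 's" where
  "meth H m = (THE M. (m, M) \<in> H)"

datatype 's conf = Cont nat 's | Halt bool 's | Stuck

definition step :: "'m instr list \<Rightarrow> ('m \<times> ('s \<Rightarrow> bool \<times> 's)) set \<Rightarrow> nat \<Rightarrow> 's \<Rightarrow> 's conf" where
  "step x H i t =
    (if i < 1 \<or> i > length x then Stuck else
     (case x ! (i - 1) of
        Basic m \<Rightarrow> if m \<notin> IF H then Stuck else
                      (case meth H m t of (b, t') \<Rightarrow> Cont (i + 1) t')
      | PosTest m \<Rightarrow> if m \<notin> IF H then Stuck else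
                      (case meth H m t of (b, t') \<Rightarrow> Cont (if b then i + 1 else i + 2) t')
      | NegTest m \<Rightarrow> if m \<notin> IF H then Stuck else
                      (case meth H m t of (b, t') \<Rightarrow> Cont (if b then i + 2 else i + 1) t')
      | FJump l \<Rightarrow> Cont (i + l) t
      | BJump l \<Rightarrow> (if l < i then Cont (i - l) t else Stuck)
      | TermT \<Rightarrow> Halt True t
      | TermF \<Rightarrow> Halt False t))"

fun run :: "'m instr list \<Rightarrow> ('m \<times> ('s \<Rightarrow> bool \<times> 's)) set \<Rightarrow> 's \<Rightarrow> nat \<Rightarrow> 's conf" where
  "run x H s 0 = Cont 1 s"
| "run x H s (Suc n) = (case run x H s n of Cont i t \<Rightarrow> step x H i t | c \<Rightarrow> c)"

definition converges :: "'m instr list \<Rightarrow> ('m \<times> ('s \<Rightarrow> bool \<times> 's)) set \<Rightarrow> 's \<Rightarrow> bool" where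
  "converges x H s \<longleftrightarrow> (\<exists>n b t. run x H s n = Halt b t)"

datatype reply = RT | RF | RD

definition rep :: "'m instr list \<Rightarrow> ('m \<times> ('s \<Rightarrow> bool \<times> 's)) set \<Rightarrow> 's \<Rightarrow> reply" where
  "rep x H s =
     (if \<exists>n t. run x H s n = Halt True t then RT
      else if \<exists>n t. run x H s n = Halt False t then RF
      else RD)"

definition Dup :: "tstate \<Rightarrow> bool \<times> tstate" where
  "Dup st = (let u = fst st @ snd st in
     if Colon \<notin> set u then (True, ([], u @ [Colon] @ u))
     else (True, ([], takeWhile (\<lambda>c. c \<noteq> Colon) u @ [Colon] @ u)))"

definition bits :: "bool list \<Rightarrow> sym list" where
  "bits w = map (\<lambda>b. if b then S1 else S0) w"

text \<open>enc is the fixed encoding x \<mapsto> overline x of L_f(IF H) into {0,1}^*.\<close>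
definition produces_solution ::
  "('m instr list \<Rightarrow> bool list) \<Rightarrow> ('m \<times> (tstate \<Rightarrow> bool \<times> tstate)) set \<Rightarrow> 'm set \<Rightarrow> 'm instr list \<Rightarrow> bool" where
  "produces_solution enc H I x \<longleftrightarrow>
     (\<forall>s. converges x H s) \<and>
     (\<forall>y\<in>L I. \<forall>v. rep x H ([], bits (enc y) @ [Colon] @ v) = RT \<longleftrightarrow> converges y H ([], v))"

definition produces_reflexive_solution ::
  "('m instr list \<Rightarrow> bool list) \<Rightarrow> ('m \<times> (tstate \<Rightarrow> bool \<times> tstate)) set \<Rightarrow> 'm set \<Rightarrow> 'm instr list \<Rightarrow> bool" where
  "produces_reflexive_solution enc H I x \<longleftrightarrow> produces_solution enc H I x \<and> x \<in> L I"

end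

theory Submission
  imports Defs
begin

(*
  Proof idea (the classical diagonal argument, made reflexive by Dup).
  From an instruction sequence x over I we build the program diag d x, which
  first executes the basic instruction d and then behaves like x with its
  replies inverted: where x would terminate positively it loops forever, where
  x would terminate negatively it terminates positively.  Backward jumps that
  would leave x are replaced by loops, so the leading d is never re-entered.
  If x converges on the state produced by d, then diag d x converges exactly
  when x does not reply T (lemma diag_converges_iff).  Taking d = dup and
  y = diag dup x, the state produced by dup from the input (bits of enc y) is
  (enc y):(enc y), on which the supposed reflexive solution x must answer the
  question "does y converge on enc y?" -- and y converges iff x says no.
  The argument does not use I \<subseteq> IF H or the injectivity of the encoding.
*)

text \<open>The instruction at index k of x (counted from 0) inside diag d x: replies are
  inverted, and backward jumps leaving x (which make x stuck) become loops.\<close>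
fun invert_instr :: "nat \<Rightarrow> 'm instr \<Rightarrow> 'm instr" where
  "invert_instr k (BJump l) = (if l \<le> k then BJump l else FJump 0)"
| "invert_instr k TermT = FJump 0"
| "invert_instr k TermF = TermT"
| "invert_instr k u = u"

definition diag :: "'m \<Rightarrow> 'm instr list \<Rightarrow> 'm instr list" where
  "diag d x = Basic d # map (\<lambda>k. invert_instr k (x ! k)) [0..<length x]"

lemma length_diag: "length (diag d x) = Suc (length x)"
  by (simp add: diag_def)

lemma nth_diag: "1 \<le> i \<Longrightarrow> i \<le> length x \<Longrightarrow> diag d x ! i = invert_instr (i - 1) (x ! (i - 1))"
  by (cases i) (auto simp: diag_def)

lemma diag_in_L:
  assumes "x \<in> L I" and "d \<in> I"
  shows "diag d x \<in> L I"
proof -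
  have "instr_methods (invert_instr k u) \<subseteq> instr_methods u" for k and u :: "'m instr"
    by (cases u) auto
  then show ?thesis
    using assms unfolding L_def diag_def by (fastforce simp: in_set_conv_nth)
qed

lemma step_not_Stuck_in_range:
  "step x H i t \<noteq> Stuck \<Longrightarrow> 1 \<le> i \<and> i \<le> length x"
  by (auto simp: step_def split: if_splits)

lemma step_diag_Cont:
  assumes "step x H i t = Cont j t'"
  shows "step (diag d x) H (Suc i) t = Cont (Suc j) t'"
proof -
  have "1 \<le> i \<and> i \<le> length x" using step_not_Stuck_in_range[of x H i t] assms by simp
  with assms show ?thesis
    by (cases "x ! (i - 1)")
       (auto simp: step_def length_diag nth_diag split: if_splits prod.splits)
qed

lemma step_diag_HaltT:
  assumes "step x H i t = Halt True t'"
  shows "step (diag d x) H (Suc i) t = Cont (Suc i) t"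
proof -
  have "1 \<le> i \<and> i \<le> length x" using step_not_Stuck_in_range[of x H i t] assms by simp
  with assms show ?thesis
    by (cases "x ! (i - 1)")
       (auto simp: step_def length_diag nth_diag split: if_splits prod.splits)
qed

lemma step_diag_HaltF:
  assumes "step x H i t = Halt False t'"
  shows "step (diag d x) H (Suc i) t = Halt True t"
proof -
  have "1 \<le> i \<and> i \<le> length x" using step_not_Stuck_in_range[of x H i t] assms by simp
  with assms show ?thesis
    by (cases "x ! (i - 1)")
       (auto simp: step_def length_diag nth_diag split: if_splits prod.splits)
qed

lemma run_Halt_last_step:
  "run x H s n = Halt b t \<Longrightarrow> \<exists>m i t0. run x H s m = Cont i t0 \<and> step x H i t0 = Halt b t"
proof (induction n)
  case 0 then show ?case by simp
next
  case (Suc n) then show ?case by (cases "run x H s n") auto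
qed

lemma run_Halt_stays:
  "run x H s n = Halt b t \<Longrightarrow> run x H s (n + k) = Halt b t"
  by (induction k) auto

lemma run_self_loop:
  assumes "run y H s n = Cont j t" and "step y H j t = Cont j t"
  shows "run y H s (n + k) = Cont j t"
  using assms by (induction k) auto

lemma self_loop_not_converges:
  assumes "run y H s n = Cont j t" and "step y H j t = Cont j t"
  shows "\<not> converges y H s"
proof
  assume "converges y H s"
  then obtain k b t' where "run y H s k = Halt b t'" unfolding converges_def by blast
  then have "run y H s (k + n) = Halt b t'" by (rule run_Halt_stays)
  moreover have "run y H s (n + k) = Cont j t" using assms by (rule run_self_loop)
  ultimately show False by (simp add: add.commute)
qed

lemma meth_of_member:
  assumes "functional_unit H" and "(d, M) \<in> H"
  shows "meth H d = M"
  using assms unfolding meth_def functional_unit_def by blast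

lemma run_diag_Cont:
  assumes "functional_unit H" and "(d, M) \<in> H"
    and "run x H (snd (M s)) n = Cont i t"
  shows "run (diag d x) H s (Suc n) = Cont (Suc i) t"
  using assms(3)
proof (induction n arbitrary: i t)
  case 0
  have "d \<in> IF H" using assms(2) unfolding IF_def by force
  with 0 show ?case
    using meth_of_member[OF assms(1,2)] by (auto simp: step_def diag_def split: prod.splits)
next
  case (Suc n)
  then obtain i' t' where prev: "run x H (snd (M s)) n = Cont i' t'"
    by (cases "run x H (snd (M s)) n") auto
  with Suc.prems have "step x H i' t' = Cont i t" by simp
  then have "step (diag d x) H (Suc i') t' = Cont (Suc i) t" by (rule step_diag_Cont)
  with Suc.IH[OF prev] show ?case by simp
qed

lemma diag_converges_iff:
  assumes "functional_unit H" and "(d, M) \<in> H"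
    and "converges x H (snd (M s))"
  shows "converges (diag d x) H s \<longleftrightarrow> rep x H (snd (M s)) \<noteq> RT"
proof (cases "\<exists>n t. run x H (snd (M s)) n = Halt True t")
  case True
  then obtain n t where halt: "run x H (snd (M s)) n = Halt True t" by blast
  obtain m i t0 where before: "run x H (snd (M s)) m = Cont i t0"
    and last: "step x H i t0 = Halt True t"
    using run_Halt_last_step[OF halt] by blast
  have "run (diag d x) H s (Suc m) = Cont (Suc i) t0"
    using run_diag_Cont[OF assms(1,2) before] .
  moreover have "step (diag d x) H (Suc i) t0 = Cont (Suc i) t0"
    using step_diag_HaltT[OF last] .
  ultimately have "\<not> converges (diag d x) H s" by (rule self_loop_not_converges)
  with True show ?thesis by (simp add: rep_def)
next
  case False
  then obtain n t where halt: "run x H (snd (M s)) n = Halt False t"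
    using assms(3) unfolding converges_def by (metis (full_types))
  obtain m i t0 where "run x H (snd (M s)) m = Cont i t0" and "step x H i t0 = Halt False t"
    using run_Halt_last_step[OF halt] by blast
  then have "run (diag d x) H s (Suc (Suc m)) = Halt True t0"
    using run_diag_Cont[OF assms(1,2)] step_diag_HaltF by simp
  then have "converges (diag d x) H s" unfolding converges_def by blast
  with False show ?thesis by (simp add: rep_def)
qed

lemma Dup_bits: "Dup ([], bits w) = (True, ([], bits w @ [Colon] @ bits w))"
proof -
  have "Colon \<notin> set (bits w)" by (auto simp: bits_def)
  then show ?thesis by (simp add: Dup_def Let_def)
qed

theorem theorem4:
  fixes H :: "('m \<times> (tstate \<Rightarrow> bool \<times> tstate)) set"
    and I :: "'m set"
    and dup :: 'm
    and enc :: "'m instr list \<Rightarrow> bool list"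
  assumes "functional_unit H"
    and "(dup, Dup) \<in> H"
    and "I \<subseteq> IF H"
    and "dup \<in> I"
    and "inj_on enc (L (IF H))"
  shows "\<not> (\<exists>x\<in>L (IF H). produces_reflexive_solution enc H I x)"
proof
  assume "\<exists>x\<in>L (IF H). produces_reflexive_solution enc H I x"
  then obtain x where sol: "produces_solution enc H I x" and "x \<in> L I"
    unfolding produces_reflexive_solution_def by blast
  define y where "y = diag dup x"
  define v where "v = bits (enc y)"
  have "y \<in> L I" unfolding y_def using \<open>x \<in> L I\<close> assms(4) by (rule diag_in_L)
  then have answer: "rep x H ([], v @ [Colon] @ v) = RT \<longleftrightarrow> converges y H ([], v)"
    using sol unfolding produces_solution_def v_def by blast
  have dup_v: "snd (Dup ([], v)) = ([], v @ [Colon] @ v)"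
    unfolding v_def by (simp add: Dup_bits)
  have "converges x H (snd (Dup ([], v)))"
    using sol unfolding produces_solution_def by blast
  then have "converges y H ([], v) \<longleftrightarrow> rep x H ([], v @ [Colon] @ v) \<noteq> RT"
    using diag_converges_iff[OF assms(1,2)] dup_v unfolding y_def by metis
  with answer show False by blast
qed

end
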